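(* Let $G$ be a graph with $m$ edges whose vertex set is partitioned as $V(G)=A\sqcup C$, where $|A|$ is bounded by a fixed constant, $G[A]\cong M$, $C$ is an independent set, and all but at most one vertex of $C$ are adjacent to every vertex of $A$. Then $$\lambda(G)=\sqrt{m}+\frac{e(M)}{v(M)}+O(m^{-1/2}),$$ where the implied constant depends only on the bound on $|A|$.
   Context: All graphs are finite and simple. $e(M)$ and $v(M)$ denote the numbers of edges and vertices of $M$; $\lambda(G)$ is the spectral radius of the adjacency matrix of $G$. *)

theory Defs
  imports "HOL-Analysis.Analysis" "Jordan_Normal_Form.Spectral_Radius"
begin

definition simple_graph :: "nat \<Rightarrow> (nat \<Rightarrow> nat \<Rightarrow> bool) \<Rightarrow> bool" where
  "simple_graph n E \<longleftrightarrow> (\<forall>i<n. \<not> E i i) \<and> (\<forall>i<n. \<forall>j<n. E i j \<longleftrightarrow> E j i)"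

definition num_edges :: "nat \<Rightarrow> (nat \<Rightarrow> nat \<Rightarrow> bool) \<Rightarrow> nat" where
  "num_edges n E = card {(i, j). i < j \<and> j < n \<and> E i j}"

definition induced_edges :: "nat set \<Rightarrow> (nat \<Rightarrow> nat \<Rightarrow> bool) \<Rightarrow> nat" where
  "induced_edges A E = card {(i, j). i \<in> A \<and> j \<in> A \<and> i < j \<and> E i j}"

text \<open>Adjacency matrix (complex entries, as required by spectral_radius).\<close>
definition adj_mat :: "nat \<Rightarrow> (nat \<Rightarrow> nat \<Rightarrow> bool) \<Rightarrow> complex mat" where
  "adj_mat n E = mat n n (\<lambda>(i, j). if E i j then 1 else 0)"

definition graph_spectral_radius :: "nat \<Rightarrow> (nat \<Rightarrow> nat \<Rightarrow> bool) \<Rightarrow> real" where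
  "graph_spectral_radius n E = spectral_radius (adj_mat n E)"

end

(* Write a = v(M), h = e(M)/a, and let C' be the set of vertices of C adjacent to all of A.
   Test the adjacency matrix against the vector equal to 1 + (deg_A v - 2h)/r on A and to a/r on C
   (resp. on C', and 0 on the at most one remaining vertex).  Because the corrections deg_A v - 2h
   sum to zero over A, the Collatz-Wielandt inequalities hold for r = h + sqrt (h^2 + |C| a + a^2)
   from above and for r = h + sqrt (h^2 + |C'| a - a^2) from below.  As m = e(M) + (number of
   A-C edges) lies between |C'| a and |C'| a + a + a^2, both radicands are m + O(a^2), so
   lambda = sqrt m + h + O(a^2 / sqrt m). *)

theory Submission
  imports Defs
begin

definition of_real_mat :: "nat \<Rightarrow> (nat \<Rightarrow> nat \<Rightarrow> real) \<Rightarrow> complex mat" where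
  "of_real_mat n R = mat n n (\<lambda>(i, j). complex_of_real (R i j))"

lemma of_real_mat_carrier [simp]: "of_real_mat n R \<in> carrier_mat n n"
  by (simp add: of_real_mat_def)

lemma of_real_mat_mult_vec_index:
  assumes "i < n" "v \<in> carrier_vec n"
  shows "(of_real_mat n R *\<^sub>v v) $ i = (\<Sum>j<n. complex_of_real (R i j) * v $ j)"
  using assms by (auto simp: of_real_mat_def scalar_prod_def lessThan_atLeast0 intro!: sum.cong)

lemma of_real_mat_mult_of_real_vec:
  "of_real_mat n R *\<^sub>v vec n (\<lambda>j. complex_of_real (x j))
     = vec n (\<lambda>i. complex_of_real (\<Sum>j<n. R i j * x j))"
  by (rule eq_vecI) (auto simp: of_real_mat_mult_vec_index, simp add: of_real_mat_def)

lemma spectral_radius_eigenvector: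
  assumes "A \<in> carrier_mat n n" "n > 0"
  obtains v \<mu> where "eigenvector A v \<mu>" "spectral_radius A = norm \<mu>"
  using spectral_radius_mem_max(1)[OF assms]
  unfolding spectrum_def eigenvalue_def by auto

lemma spectral_radius_nonneg:
  assumes "A \<in> carrier_mat n n" "n > 0"
  shows "spectral_radius A \<ge> 0"
  by (metis spectral_radius_eigenvector[OF assms] norm_ge_zero)

lemma spectral_radius_smult_ge:
  assumes A: "A \<in> carrier_mat n n" and n: "n > 0"
  shows "norm c * spectral_radius A \<le> spectral_radius (c \<cdot>\<^sub>m A)"
proof -
  obtain v \<mu> where ev: "eigenvector A v \<mu>" and \<rho>: "spectral_radius A = norm \<mu>"
    using spectral_radius_eigenvector[OF A n] .
  have v: "v \<in> carrier_vec n" and Av: "A *\<^sub>v v = \<mu> \<cdot>\<^sub>v v"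
    using ev A by (auto simp: eigenvector_def)
  have "(c \<cdot>\<^sub>m A) *\<^sub>v v = c \<cdot>\<^sub>v (A *\<^sub>v v)"
    using A v by (intro eq_vecI) (auto simp: scalar_prod_def sum_distrib_left ac_simps)
  hence "(c \<cdot>\<^sub>m A) *\<^sub>v v = (c * \<mu>) \<cdot>\<^sub>v v"
    by (simp add: Av smult_smult_assoc)
  hence "eigenvector (c \<cdot>\<^sub>m A) v (c * \<mu>)"
    using ev by (simp add: eigenvector_def)
  hence "norm (c * \<mu>) \<in> norm ` spectrum (c \<cdot>\<^sub>m A)"
    unfolding spectrum_def eigenvalue_def by blast
  thus ?thesis
    using spectral_radius_mem_max(2)[of "c \<cdot>\<^sub>m A" n] A n \<rho> by (simp add: norm_mult)
qed

lemma spectral_radius_le_if_subinvariant: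
  fixes R :: "nat \<Rightarrow> nat \<Rightarrow> real" and x :: "nat \<Rightarrow> real"
  assumes n: "n > 0" and R: "\<And>i j. i < n \<Longrightarrow> j < n \<Longrightarrow> R i j \<ge> 0"
    and x: "\<And>i. i < n \<Longrightarrow> x i > 0"
    and sub: "\<And>i. i < n \<Longrightarrow> (\<Sum>j<n. R i j * x j) \<le> r * x i"
  shows "spectral_radius (of_real_mat n R) \<le> r"
proof -
  obtain v \<mu> where ev: "eigenvector (of_real_mat n R) v \<mu>"
    and \<rho>: "spectral_radius (of_real_mat n R) = norm \<mu>"
    using spectral_radius_eigenvector[OF of_real_mat_carrier n] .
  have v: "v \<in> carrier_vec n" "v \<noteq> 0\<^sub>v n" and Rv: "of_real_mat n R *\<^sub>v v = \<mu> \<cdot>\<^sub>v v"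
    using ev by (auto simp: eigenvector_def of_real_mat_def)
  \<comment> \<open>compare v with x at an index where the ratio |v i| / x i is maximal\<close>
  define M where "M = (MAX j\<in>{..<n}. norm (v $ j) / x j)"
  have "M \<in> (\<lambda>j. norm (v $ j) / x j) ` {..<n}"
    unfolding M_def using n by (intro Max_in) auto
  then obtain i where i: "i < n" "M = norm (v $ i) / x i" by auto
  have v_le: "norm (v $ j) \<le> M * x j" if "j < n" for j
  proof -
    have "norm (v $ j) / x j \<le> M" unfolding M_def using that by (intro Max_ge) auto
    thus ?thesis using x[OF that] by (simp add: pos_divide_le_eq)
  qed
  obtain k where k: "k < n" "v $ k \<noteq> 0"
    using v by (metis carrier_vecD eq_vecI index_zero_vec)
  have "0 < norm (v $ k)" using k by simp
  also have "\<dots> \<le> M * x k" using v_le k by simp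
  finally have M: "M > 0" using x[OF k(1)] by (simp add: zero_less_mult_iff)
  have vi: "norm (v $ i) = M * x i" using i x[OF i(1)] by simp
  have "norm \<mu> * norm (v $ i) = norm ((of_real_mat n R *\<^sub>v v) $ i)"
    using Rv i v by (simp add: norm_mult)
  also have "\<dots> = norm (\<Sum>j<n. complex_of_real (R i j) * v $ j)"
    using i v by (simp add: of_real_mat_mult_vec_index)
  also have "\<dots> \<le> (\<Sum>j<n. R i j * norm (v $ j))"
    using i R by (intro sum_norm_le) (simp add: norm_mult)
  also have "\<dots> \<le> (\<Sum>j<n. R i j * (M * x j))"
    using R i v_le by (intro sum_mono mult_left_mono) auto
  also have "\<dots> = M * (\<Sum>j<n. R i j * x j)"
    by (simp add: sum_distrib_left ac_simps)
  also have "\<dots> \<le> r * norm (v $ i)"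
    using sub[OF i(1)] M vi by (simp add: ac_simps)
  finally show ?thesis
    using vi M x[OF i(1)] \<rho> by simp
qed

lemma of_real_mat_pow_superinvariant:
  fixes S :: "nat \<Rightarrow> nat \<Rightarrow> real" and x :: "nat \<Rightarrow> real"
  assumes S: "\<And>i j. i < n \<Longrightarrow> j < n \<Longrightarrow> S i j \<ge> 0" and q: "q \<ge> 0"
    and x: "\<And>i. i < n \<Longrightarrow> x i \<ge> 0"
    and super: "\<And>i. i < n \<Longrightarrow> q * x i \<le> (\<Sum>j<n. S i j * x j)"
    and i: "i < n"
  shows "q ^ k * x i \<le> Re ((of_real_mat n S ^\<^sub>m k *\<^sub>v vec n (\<lambda>j. complex_of_real (x j))) $ i)"
  using x super i
proof (induction k arbitrary: x i)
  case 0
  then show ?case by (simp add: of_real_mat_def)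
next
  case (Suc k)
  define y where "y i = (\<Sum>j<n. S i j * x j)" for i
  have y: "y i \<ge> 0" if "i < n" for i
    using S Suc.prems(1) that by (auto simp: y_def intro!: sum_nonneg)
  have y_sup: "q * y i \<le> (\<Sum>j<n. S i j * y j)" if "i < n" for i
  proof -
    have "q * y i = (\<Sum>j<n. S i j * (q * x j))"
      by (simp add: y_def sum_distrib_left ac_simps)
    also have "\<dots> \<le> (\<Sum>j<n. S i j * y j)"
      using S Suc.prems(2) that by (intro sum_mono mult_left_mono) (auto simp: y_def)
    finally show ?thesis .
  qed
  have "q ^ Suc k * x i = q ^ k * (q * x i)" by (simp add: ac_simps)
  also have "\<dots> \<le> q ^ k * y i"
    using Suc.prems(2)[OF Suc.prems(3)] q by (simp add: y_def mult_left_mono)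
  also have "\<dots> \<le> Re ((of_real_mat n S ^\<^sub>m k *\<^sub>v vec n (\<lambda>j. complex_of_real (y j))) $ i)"
    using Suc.IH[of y i] y y_sup Suc.prems(3) by simp
  also have "of_real_mat n S ^\<^sub>m k *\<^sub>v vec n (\<lambda>j. complex_of_real (y j))
      = of_real_mat n S ^\<^sub>m Suc k *\<^sub>v vec n (\<lambda>j. complex_of_real (x j))"
    by (simp add: assoc_mult_mat_vec[of _ n n _ n] of_real_mat_mult_of_real_vec y_def)
  finally show ?case .
qed

lemma spectral_radius_ge_if_superinvariant:
  fixes R :: "nat \<Rightarrow> nat \<Rightarrow> real" and x :: "nat \<Rightarrow> real"
  assumes n: "n > 0" and R: "\<And>i j. i < n \<Longrightarrow> j < n \<Longrightarrow> R i j \<ge> 0"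
    and x: "\<And>i. i < n \<Longrightarrow> x i \<ge> 0" and k: "k < n" "x k > 0"
    and super: "\<And>i. i < n \<Longrightarrow> r * x i \<le> (\<Sum>j<n. R i j * x j)"
  shows "r \<le> spectral_radius (of_real_mat n R)"
proof (rule ccontr)
  let ?\<rho> = "spectral_radius (of_real_mat n R)"
  assume "\<not> r \<le> ?\<rho>"
  \<comment> \<open>After rescaling by s with \<rho> < s < r the powers of R/s stay bounded,
    whereas x forces them to grow like (r/s)^m.\<close>
  define s where "s = (?\<rho> + r) / 2"
  have s: "?\<rho> < s" "s < r" "s > 0"
    using \<open>\<not> r \<le> ?\<rho>\<close> spectral_radius_nonneg[OF of_real_mat_carrier[of n R] n] by (auto simp: s_def)
  define S where "S i j = R i j / s" for i j
  define q where "q = r / s"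
  have q: "q > 1" using s by (simp add: q_def)
  have "of_real_mat n R = complex_of_real s \<cdot>\<^sub>m of_real_mat n S"
    using s by (auto simp: of_real_mat_def S_def)
  hence "s * spectral_radius (of_real_mat n S) \<le> ?\<rho>"
    using spectral_radius_smult_ge[OF of_real_mat_carrier n, of "complex_of_real s" S] s by simp
  hence "s * spectral_radius (of_real_mat n S) < s * 1" using s by linarith
  hence "spectral_radius (of_real_mat n S) < 1" using s(3) by (simp only: mult_less_cancel_left_pos)
  then obtain c where c: "\<And>m. norm_bound (of_real_mat n S ^\<^sub>m m) c"
    using spectral_radius_jnf_norm_bound_less_1_upper_triangular[OF of_real_mat_carrier] by blast
  have bound: "q ^ m * x k \<le> c * (\<Sum>j<n. x j)" for m
  proof -
    let ?B = "of_real_mat n S ^\<^sub>m m"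
    have B: "?B \<in> carrier_mat n n" by simp
    have "q ^ m * x k \<le> Re ((?B *\<^sub>v vec n (\<lambda>j. complex_of_real (x j))) $ k)"
    proof (rule of_real_mat_pow_superinvariant[OF _ _ x _ k(1)])
      fix i assume i: "i < n"
      show "q * x i \<le> (\<Sum>j<n. S i j * x j)"
        using super[OF i] s by (simp add: S_def q_def sum_divide_distrib[symmetric] divide_right_mono)
    qed (use R s q in \<open>auto simp: S_def\<close>)
    also have "\<dots> \<le> norm ((?B *\<^sub>v vec n (\<lambda>j. complex_of_real (x j))) $ k)"
      by (rule complex_Re_le_cmod)
    also have "(?B *\<^sub>v vec n (\<lambda>j. complex_of_real (x j))) $ k
        = (\<Sum>j<n. ?B $$ (k, j) * complex_of_real (x j))"
      using k carrier_matD[OF B] by (auto simp: scalar_prod_def lessThan_atLeast0 intro!: sum.cong)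
    also have "norm (\<Sum>j<n. ?B $$ (k, j) * complex_of_real (x j)) \<le> (\<Sum>j<n. c * x j)"
      using c[of m] k carrier_matD[OF B] x unfolding norm_bound_def
      by (intro sum_norm_le) (auto simp: norm_mult intro!: mult_right_mono)
    finally show ?thesis by (simp add: sum_distrib_left)
  qed
  obtain m where "c * (\<Sum>j<n. x j) / x k < q ^ m" using real_arch_pow[OF q] by blast
  with bound[of m] k show False by (simp add: divide_less_eq)
qed

lemma card_filter_eq_sum:
  "finite W \<Longrightarrow> card {j\<in>W. P j} = (\<Sum>j\<in>W. if P j then 1 else 0)"
  by (simp add: sum.inter_filter[symmetric])

lemma sum_card_neighbours_swap:
  assumes "finite V" "finite W" and sym: "\<And>i j. i \<in> V \<Longrightarrow> j \<in> W \<Longrightarrow> E i j \<longleftrightarrow> E j i"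
  shows "(\<Sum>i\<in>V. card {j\<in>W. E i j}) = (\<Sum>j\<in>W. card {i\<in>V. E j i})"
proof -
  have "(\<Sum>i\<in>V. card {j\<in>W. E i j}) = (\<Sum>i\<in>V. \<Sum>j\<in>W. if E i j then 1 else 0)"
    using assms by (simp add: card_filter_eq_sum)
  also have "\<dots> = (\<Sum>j\<in>W. \<Sum>i\<in>V. if E j i then 1 else 0)"
    by (subst sum.swap) (auto simp: sym intro!: sum.cong)
  also have "\<dots> = (\<Sum>j\<in>W. card {i\<in>V. E j i})"
    using assms by (simp add: card_filter_eq_sum)
  finally show ?thesis .
qed

lemma sum_card_neighbours_eq_twice_edges:
  fixes E :: "'a::linorder \<Rightarrow> 'a \<Rightarrow> bool"
  assumes fin: "finite V" and irrefl: "\<And>i. i \<in> V \<Longrightarrow> \<not> E i i"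
    and sym: "\<And>i j. i \<in> V \<Longrightarrow> j \<in> V \<Longrightarrow> E i j \<longleftrightarrow> E j i"
  shows "(\<Sum>i\<in>V. card {j\<in>V. E i j}) = 2 * card {(i, j). i \<in> V \<and> j \<in> V \<and> i < j \<and> E i j}"
proof -
  let ?L = "{(i, j). i \<in> V \<and> j \<in> V \<and> i < j \<and> E i j}"
  have fin_L: "finite ?L" by (rule finite_subset[of _ "V \<times> V"]) (use fin in auto)
  have "(\<Sum>i\<in>V. card {j\<in>V. E i j}) = card (SIGMA i:V. {j\<in>V. E i j})"
    using fin by (simp add: card_SigmaI)
  also have "(SIGMA i:V. {j\<in>V. E i j}) = ?L \<union> prod.swap ` ?L"
    using irrefl sym by (auto simp: image_iff) (metis linorder_neqE)
  also have "card \<dots> = card ?L + card (prod.swap ` ?L)"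
    using fin_L by (intro card_Un_disjoint) auto
  also have "card (prod.swap ` ?L) = card ?L"
    by (simp add: card_image)
  finally show ?thesis by simp
qed

lemma quadratic_pos_root:
  fixes h Q :: real
  assumes "Q > 0"
  defines "r \<equiv> h + sqrt (h\<^sup>2 + Q)"
  shows "r > 0" "r > 2 * h" "Q / r = r - 2 * h"
proof -
  have "\<bar>h\<bar> = sqrt (h\<^sup>2)" by simp
  also have "\<dots> < sqrt (h\<^sup>2 + Q)" using assms by (intro real_sqrt_less_mono) simp
  finally show r_pos: "r > 0" and "r > 2 * h" by (auto simp: r_def)
  have "r * (r - 2 * h) = (sqrt (h\<^sup>2 + Q))\<^sup>2 - h\<^sup>2"
    by (simp add: r_def algebra_simps power2_eq_square)
  also have "\<dots> = Q" using assms by (simp add: add_pos_nonneg)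
  finally show "Q / r = r - 2 * h" using r_pos by (auto simp: field_simps)
qed

lemma abs_sqrt_diff_le:
  fixes p m :: real
  assumes "p \<ge> 0" "m > 0"
  shows "\<bar>sqrt p - sqrt m\<bar> \<le> \<bar>p - m\<bar> / sqrt m"
proof -
  have "p - m = (sqrt p - sqrt m) * (sqrt p + sqrt m)"
    using assms by (simp add: algebra_simps)
  hence "\<bar>p - m\<bar> = \<bar>sqrt p - sqrt m\<bar> * (sqrt p + sqrt m)"
    using assms by (simp add: abs_mult)
  also have "\<dots> \<ge> \<bar>sqrt p - sqrt m\<bar> * sqrt m"
    using assms by (intro mult_left_mono) auto
  finally show ?thesis using assms by (simp add: pos_le_divide_eq)
qed

lemma abs_diff_sqrt_le_if_between:
  fixes \<rho> h pl pu m B :: real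
  assumes "h + sqrt pl \<le> \<rho>" "\<rho> \<le> h + sqrt pu" "pl \<ge> 0" "pu \<ge> 0" "m > 0"
    and "\<bar>pl - m\<bar> \<le> B" "\<bar>pu - m\<bar> \<le> B"
  shows "\<bar>\<rho> - sqrt m - h\<bar> \<le> B / sqrt m"
proof -
  have "\<bar>sqrt p - sqrt m\<bar> \<le> B / sqrt m" if "p \<ge> 0" "\<bar>p - m\<bar> \<le> B" for p
    using \<open>m > 0\<close> by (intro order.trans[OF abs_sqrt_diff_le[OF that(1)]] divide_right_mono that) auto
  from this[of pl] this[of pu] show ?thesis using assms by (simp add: abs_le_iff)
qed

locale graph_with_core =
  fixes n :: nat and E :: "nat \<Rightarrow> nat \<Rightarrow> bool" and A :: "nat set"
  assumes simple: "simple_graph n E"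
    and core_subset: "A \<subseteq> {0..<n}" and core_nonempty: "A \<noteq> {}"
begin

abbreviation periphery :: "nat set" where
  "periphery \<equiv> {0..<n} - A"

definition deg_core :: "nat \<Rightarrow> nat" where
  "deg_core i = card {j\<in>A. E i j}"

definition density :: real where
  "density = real (induced_edges A E) / real (card A)"

definition adj :: "nat \<Rightarrow> nat \<Rightarrow> real" where
  "adj i j = (if E i j then 1 else 0)"

text \<open>Approximate Perron vector for the approximate eigenvalue r; 2 * density is the mean
  degree of M.\<close>
definition test_vector :: "real \<Rightarrow> nat set \<Rightarrow> nat \<Rightarrow> real" where
  "test_vector r D j =
     (if j \<in> A then 1 + (real (deg_core j) - 2 * density) / r
      else if j \<in> D then real (card A) / r else 0)"

lemma core_lt: "i \<in> A \<Longrightarrow> i < n"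
  using core_subset by auto

lemma finite_core: "finite A"
  using core_subset finite_subset by blast

lemma card_core_pos: "card A > 0"
  using finite_core core_nonempty by (simp add: card_gt_0_iff)

lemma irrefl: "i < n \<Longrightarrow> \<not> E i i"
  and sym: "i < n \<Longrightarrow> j < n \<Longrightarrow> E i j \<longleftrightarrow> E j i"
  using simple by (auto simp: simple_graph_def)

lemma graph_spectral_radius_eq: "graph_spectral_radius n E = spectral_radius (of_real_mat n adj)"
  unfolding graph_spectral_radius_def adj_mat_def of_real_mat_def adj_def
  by (rule arg_cong[where f = "\<lambda>f. spectral_radius (mat n n f)"]) auto

lemma sum_vertices_split:
  "(\<Sum>j<n. f j) = (\<Sum>j\<in>A. f j) + (\<Sum>j\<in>periphery. f j)"
  using sum.subset_diff[OF core_subset] by (simp add: lessThan_atLeast0 add.commute)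

lemma sum_deg_core: "(\<Sum>i\<in>A. deg_core i) = 2 * induced_edges A E"
  unfolding deg_core_def induced_edges_def
  using irrefl sym core_lt by (intro sum_card_neighbours_eq_twice_edges finite_core) auto

lemma deg_core_le: "deg_core i \<le> card A"
  unfolding deg_core_def using finite_core by (intro card_mono) auto

lemma density_nonneg: "density \<ge> 0"
  by (simp add: density_def)

lemma twice_density_le: "2 * density \<le> card A"
proof -
  have "2 * induced_edges A E \<le> card A * card A"
    using sum_mono[of A deg_core "\<lambda>_. card A"] deg_core_le by (simp add: sum_deg_core)
  hence "2 * real (induced_edges A E) \<le> real (card A) * real (card A)"
    by (metis of_nat_le_iff of_nat_mult of_nat_numeral)
  thus ?thesis using card_core_pos by (simp add: density_def pos_divide_le_eq)
qed

lemma test_vector_core_pos: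
  assumes "r > 2 * density" "j \<in> A"
  shows "test_vector r D j > 0"
proof -
  have "r + (real (deg_core j) - 2 * density) > 0" using assms(1) by simp
  moreover have "r > 0" using assms(1) density_nonneg by linarith
  ultimately show ?thesis using assms(2) by (simp add: test_vector_def field_simps)
qed

lemma test_vector_nonneg:
  assumes "r > 2 * density"
  shows "test_vector r D j \<ge> 0"
proof (cases "j \<in> A")
  case True
  then show ?thesis using test_vector_core_pos[OF assms True, of D] by simp
next
  case False
  then show ?thesis using assms density_nonneg by (simp add: test_vector_def)
qed

lemma sum_test_vector_core: "(\<Sum>j\<in>A. test_vector r D j) = card A"
proof -
  have "(\<Sum>j\<in>A. real (deg_core j) - 2 * density) = 0"
    using card_core_pos sum_deg_core
    by (simp add: sum_subtractf density_def flip: of_nat_sum)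
  thus ?thesis
    by (simp add: test_vector_def sum.distrib flip: sum_divide_distrib)
qed

lemma core_row_sum_deviation:
  assumes "r > 0"
  shows "\<bar>(\<Sum>j\<in>A. adj i j * test_vector r D j) - deg_core i\<bar> \<le> (card A)\<^sup>2 / r"
proof -
  let ?t = "\<lambda>j. real (deg_core j) - 2 * density"
  have "(\<Sum>j\<in>A. adj i j) = deg_core i"
    using finite_core by (simp add: adj_def deg_core_def sum.If_cases Int_def)
  hence "(\<Sum>j\<in>A. adj i j * test_vector r D j) - deg_core i = (\<Sum>j\<in>A. adj i j * ?t j) / r"
    by (simp add: test_vector_def algebra_simps sum.distrib sum_divide_distrib)
  moreover have "\<bar>\<Sum>j\<in>A. adj i j * ?t j\<bar> \<le> (card A)\<^sup>2"
  proof -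
    have "\<bar>adj i j * ?t j\<bar> \<le> card A" for j
      using deg_core_le[of j] density_nonneg twice_density_le by (auto simp: adj_def)
    hence "\<bar>\<Sum>j\<in>A. adj i j * ?t j\<bar> \<le> (\<Sum>j\<in>A. real (card A))"
      by (intro sum_abs[THEN order.trans] sum_mono)
    thus ?thesis by (simp add: power2_eq_square)
  qed
  ultimately show ?thesis using assms by (simp add: divide_right_mono)
qed

lemma spectral_radius_adj_le:
  assumes indep: "\<And>i j. i \<in> periphery \<Longrightarrow> j \<in> periphery \<Longrightarrow> \<not> E i j"
  shows "spectral_radius (of_real_mat n adj)
           \<le> density + sqrt (density\<^sup>2 + real (card periphery) * real (card A) + (real (card A))\<^sup>2)"
proof -
  define Q where "Q = real (card periphery) * card A + (card A)\<^sup>2"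
  \<comment> \<open>r solves r^2 - 2 * density * r = Q, which is what balances the rows of the core\<close>
  define r where "r = density + sqrt (density\<^sup>2 + Q)"
  have "Q > 0" using card_core_pos by (simp add: Q_def add_nonneg_pos)
  note root = quadratic_pos_root[OF this, of density, folded r_def]
  let ?x = "test_vector r periphery"
  have "(\<Sum>j<n. adj i j * ?x j) \<le> r * ?x i" if "i < n" for i
  proof (cases "i \<in> A")
    case True
    have "(\<Sum>j\<in>periphery. adj i j * ?x j) \<le> (\<Sum>j\<in>periphery. card A / r)"
      using root(1) by (intro sum_mono) (auto simp: adj_def test_vector_def)
    moreover have "(\<Sum>j\<in>A. adj i j * ?x j) \<le> deg_core i + (card A)\<^sup>2 / r"
      using core_row_sum_deviation[OF root(1), of i periphery] by (simp add: abs_le_iff)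
    ultimately have "(\<Sum>j<n. adj i j * ?x j) \<le> deg_core i + Q / r"
      by (simp add: sum_vertices_split Q_def add_divide_distrib)
    also have "\<dots> = r * ?x i" using True root by (simp add: test_vector_def field_simps)
    finally show ?thesis .
  next
    case False
    hence "(\<Sum>j\<in>periphery. adj i j * ?x j) = 0" using indep that by (simp add: adj_def)
    moreover have "(\<Sum>j\<in>A. adj i j * ?x j) \<le> (\<Sum>j\<in>A. ?x j)"
      using test_vector_nonneg root(2) by (intro sum_mono) (auto simp: adj_def)
    ultimately have "(\<Sum>j<n. adj i j * ?x j) \<le> card A"
      using sum_test_vector_core by (simp add: sum_vertices_split)
    moreover have "?x i = card A / r" using False that by (simp add: test_vector_def)
    ultimately show ?thesis using root(1) by simp
  qed
  moreover have "?x i > 0" if "i < n" for i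
    using test_vector_core_pos[OF root(2)] root(1) card_core_pos that
    by (cases "i \<in> A") (auto simp: test_vector_def)
  moreover have "n > 0" using core_subset core_nonempty by auto
  ultimately have "spectral_radius (of_real_mat n adj) \<le> r"
    by (intro spectral_radius_le_if_subinvariant[where x = ?x]) (auto simp: adj_def)
  thus ?thesis by (simp add: r_def Q_def add.assoc)
qed

lemma spectral_radius_adj_ge:
  assumes D: "D \<subseteq> periphery" and complete: "\<And>c b. c \<in> D \<Longrightarrow> b \<in> A \<Longrightarrow> E c b"
    and large: "card A < card D"
  shows "density + sqrt (density\<^sup>2 + real (card D) * real (card A) - (real (card A))\<^sup>2)
           \<le> spectral_radius (of_real_mat n adj)"
proof -
  define Q where "Q = real (card D) * card A - (card A)\<^sup>2"
  define r where "r = density + sqrt (density\<^sup>2 + Q)"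
  have "Q > 0"
    using large card_core_pos by (simp add: Q_def power2_eq_square)
  note root = quadratic_pos_root[OF this, of density, folded r_def]
  let ?x = "test_vector r D"
  have adj_D: "adj i j = 1" if "i \<in> A" "j \<in> D" for i j
  proof -
    have "i < n" "j < n" using that D core_subset by auto
    thus ?thesis using complete[OF that(2,1)] sym by (simp add: adj_def)
  qed
  have "r * ?x i \<le> (\<Sum>j<n. adj i j * ?x j)" if "i < n" for i
  proof (cases "i \<in> A")
    case True
    have "(\<Sum>j\<in>periphery. adj i j * ?x j) = (\<Sum>j\<in>D. adj i j * ?x j)"
      using D by (intro sum.mono_neutral_right) (auto simp: test_vector_def)
    also have "\<dots> = card D * card A / r"
      using D adj_D[OF True] by (simp add: test_vector_def subset_iff)
    finally have "(\<Sum>j\<in>periphery. adj i j * ?x j) = card D * card A / r" .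
    moreover have "deg_core i - (card A)\<^sup>2 / r \<le> (\<Sum>j\<in>A. adj i j * ?x j)"
      using core_row_sum_deviation[OF root(1), of i D] by (simp add: abs_le_iff)
    ultimately have "deg_core i + Q / r \<le> (\<Sum>j<n. adj i j * ?x j)"
      by (simp add: sum_vertices_split Q_def diff_divide_distrib)
    moreover have "r * ?x i = deg_core i + Q / r"
      using True root by (simp add: test_vector_def field_simps)
    ultimately show ?thesis by simp
  next
    case False
    have "(\<Sum>j\<in>periphery. adj i j * ?x j) \<ge> 0"
      using test_vector_nonneg[OF root(2)] by (intro sum_nonneg) (simp add: adj_def)
    moreover have "r * ?x i \<le> (\<Sum>j\<in>A. adj i j * ?x j)"
    proof (cases "i \<in> D")
      case True
      hence "(\<Sum>j\<in>A. adj i j * ?x j) = (\<Sum>j\<in>A. ?x j)"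
        using complete by (simp add: adj_def)
      moreover have "?x i = card A / r" using True False by (simp add: test_vector_def)
      ultimately show ?thesis using root(1) by (simp add: sum_test_vector_core)
    next
      case False
      hence "?x i = 0" using \<open>i \<notin> A\<close> by (simp add: test_vector_def)
      moreover have "(\<Sum>j\<in>A. adj i j * ?x j) \<ge> 0"
        using test_vector_nonneg[OF root(2)] by (intro sum_nonneg) (simp add: adj_def)
      ultimately show ?thesis by simp
    qed
    ultimately show ?thesis by (simp add: sum_vertices_split)
  qed
  moreover obtain k where "k \<in> A" using core_nonempty by blast
  ultimately have "r \<le> spectral_radius (of_real_mat n adj)"
    using core_subset test_vector_core_pos[OF root(2)] test_vector_nonneg[OF root(2)]
    by (intro spectral_radius_ge_if_superinvariant[where x = ?x and k = k]) (auto simp: adj_def)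
  thus ?thesis by (simp add: r_def Q_def add_diff_eq)
qed



lemma num_edges_eq:
  assumes indep: "\<And>i j. i \<in> periphery \<Longrightarrow> j \<in> periphery \<Longrightarrow> \<not> E i j"
  shows "num_edges n E = induced_edges A E + (\<Sum>c\<in>periphery. deg_core c)"
proof -
  let ?N = "\<lambda>W i. card {j\<in>W. E i j}"
  have split: "?N {0..<n} i = deg_core i + ?N periphery i" for i
  proof -
    have "{j\<in>{0..<n}. E i j} = {j\<in>A. E i j} \<union> {j\<in>periphery. E i j}" using core_subset by auto
    thus ?thesis unfolding deg_core_def by (simp only:) (rule card_Un_disjoint, use finite_core in auto)
  qed
  have swap: "(\<Sum>i\<in>A. ?N periphery i) = (\<Sum>c\<in>periphery. deg_core c)"
    unfolding deg_core_def using finite_core core_subset sym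
    by (intro sum_card_neighbours_swap) auto
  have no_inner: "(\<Sum>i\<in>periphery. ?N periphery i) = 0"
    using indep by (auto intro!: sum.neutral)
  have "2 * num_edges n E = (\<Sum>i<n. ?N {0..<n} i)"
    unfolding num_edges_def lessThan_atLeast0 using irrefl sym
    by (subst sum_card_neighbours_eq_twice_edges) (auto intro!: arg_cong[where f = card])
  also have "\<dots> = (\<Sum>i\<in>A. deg_core i) + (\<Sum>i\<in>A. ?N periphery i)
                   + (\<Sum>i\<in>periphery. deg_core i) + (\<Sum>i\<in>periphery. ?N periphery i)"
    unfolding sum_vertices_split split sum.distrib by (simp only: add.assoc)
  also have "\<dots> = 2 * (induced_edges A E + (\<Sum>c\<in>periphery. deg_core c))"
    unfolding sum_deg_core swap no_inner by simp
  finally show ?thesis by simp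
qed

definition complete_part :: "nat set" where
  "complete_part = {c\<in>periphery. \<forall>b\<in>A. E c b}"

lemma complete_part_subset: "complete_part \<subseteq> periphery"
  by (auto simp: complete_part_def)

lemma card_periphery_le:
  assumes "card {v\<in>periphery. \<exists>a\<in>A. \<not> E v a} \<le> 1"
  shows "card periphery \<le> card complete_part + 1"
proof -
  have "periphery = complete_part \<union> {v\<in>periphery. \<exists>a\<in>A. \<not> E v a}"
    unfolding complete_part_def by blast
  hence "card periphery \<le> card complete_part + card {v\<in>periphery. \<exists>a\<in>A. \<not> E v a}"
    by (metis card_Un_le)
  thus ?thesis using assms by linarith
qed

lemma sum_deg_core_periphery_bounds:
  "card complete_part * card A \<le> (\<Sum>c\<in>periphery. deg_core c)"
  "(\<Sum>c\<in>periphery. deg_core c) \<le> card periphery * card A"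
proof -
  have "deg_core c = card A" if "c \<in> complete_part" for c
  proof -
    have "{j\<in>A. E c j} = A" using that by (auto simp: complete_part_def)
    thus ?thesis by (simp add: deg_core_def)
  qed
  hence "card complete_part * card A = (\<Sum>c\<in>complete_part. deg_core c)" by simp
  also have "\<dots> \<le> (\<Sum>c\<in>periphery. deg_core c)"
    using complete_part_subset by (intro sum_mono2) auto
  finally show "card complete_part * card A \<le> (\<Sum>c\<in>periphery. deg_core c)" .
  show "(\<Sum>c\<in>periphery. deg_core c) \<le> card periphery * card A"
    using sum_mono[of periphery deg_core "\<lambda>_. card A"] deg_core_le by simp
qed

theorem spectral_radius_asymptotics:
  assumes indep: "\<And>i j. i \<in> periphery \<Longrightarrow> j \<in> periphery \<Longrightarrow> \<not> E i j"
    and exceptional: "card {v\<in>periphery. \<exists>a\<in>A. \<not> E v a} \<le> 1"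
    and K: "card A \<le> K" and large: "num_edges n E \<ge> 2 * K\<^sup>2 + K + 1"
  shows "\<bar>graph_spectral_radius n E - sqrt (num_edges n E) - density\<bar>
           \<le> 3 * (real K)\<^sup>2 / sqrt (num_edges n E)"
proof -
  define a :: real where "a = card A"
  define d :: real where "d = card complete_part"
  define p :: real where "p = card periphery"
  define m :: real where "m = num_edges n E"
  define \<sigma> where "\<sigma> = (\<Sum>c\<in>periphery. deg_core c)"
  have m_eq: "m = density * a + \<sigma>"
    using num_edges_eq[OF indep] card_core_pos by (simp add: m_def a_def density_def \<sigma>_def)
  have "d \<le> p" "p \<le> d + 1"
    using card_mono[OF _ complete_part_subset] card_periphery_le[OF exceptional]
    by (auto simp: d_def p_def)
  have a: "1 \<le> a" "a \<le> K" using card_core_pos K by (auto simp: a_def)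
  have p: "d * a \<le> p * a" "p * a \<le> d * a + a"
    using a \<open>d \<le> p\<close> mult_right_mono[OF \<open>p \<le> d + 1\<close>, of a]
    by (auto simp: mult_right_mono distrib_right)
  have "card complete_part * card A \<le> \<sigma>" "\<sigma> \<le> card periphery * card A"
    using sum_deg_core_periphery_bounds by (simp_all add: \<sigma>_def)
  hence \<sigma>: "d * a \<le> \<sigma>" "\<sigma> \<le> p * a"
    by (simp_all add: d_def p_def a_def flip: of_nat_mult)
  have h: "0 \<le> density" "2 * density \<le> a"
    using density_nonneg twice_density_le by (auto simp: a_def)
  have products: "0 \<le> density * density" "density * density \<le> a * a" "0 \<le> density * a"
    "density * a \<le> a * a" "a \<le> a * a" "a * a \<le> real K * K"
    using a h by (auto intro: mult_mono)
  have m_large: "2 * (real K * K) + K + 1 \<le> m"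
    using of_nat_mono[OF large, where 'a = real] by (simp add: m_def power2_eq_square)
  note bounds = m_eq a p \<sigma> products m_large
  have "d > a"
  proof (rule ccontr)
    assume "\<not> d > a"
    hence "d * a \<le> a * a" using a by (simp add: mult_right_mono)
    thus False using bounds by linarith
  qed
  hence "d * a - a * a > 0" using a by (simp add: mult_strict_right_mono)
  have lower: "density + sqrt (density\<^sup>2 + d * a - a\<^sup>2) \<le> spectral_radius (of_real_mat n adj)"
    using \<open>d > a\<close> spectral_radius_adj_ge[OF complete_part_subset]
    by (simp add: a_def d_def complete_part_def)
  have upper: "spectral_radius (of_real_mat n adj) \<le> density + sqrt (density\<^sup>2 + p * a + a\<^sup>2)"
    using spectral_radius_adj_le[OF indep] by (simp add: a_def p_def)
  have "density\<^sup>2 + d * a - a\<^sup>2 \<ge> 0"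
    using \<open>d * a - a * a > 0\<close> bounds unfolding power2_eq_square by linarith
  moreover have "density\<^sup>2 + p * a + a\<^sup>2 \<ge> 0"
    using \<open>d * a - a * a > 0\<close> bounds unfolding power2_eq_square by linarith
  moreover have "m > 0"
    using bounds by linarith
  moreover have "\<bar>density\<^sup>2 + d * a - a\<^sup>2 - m\<bar> \<le> 3 * (real K)\<^sup>2"
    using \<open>d * a - a * a > 0\<close> bounds unfolding power2_eq_square abs_le_iff by linarith
  moreover have "\<bar>density\<^sup>2 + p * a + a\<^sup>2 - m\<bar> \<le> 3 * (real K)\<^sup>2"
    using bounds unfolding power2_eq_square abs_le_iff by linarith
  ultimately have "\<bar>spectral_radius (of_real_mat n adj) - sqrt m - density\<bar> \<le> 3 * (real K)\<^sup>2 / sqrt m"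
    by (rule abs_diff_sqrt_le_if_between[OF lower upper])
  thus ?thesis by (simp add: graph_spectral_radius_eq m_def)
qed

end

theorem lemma4p3:
  fixes K :: nat
  shows "\<exists>c :: real. \<exists>m0 :: nat. \<forall>n E A.
     simple_graph n E \<and> A \<subseteq> {0..<n} \<and> A \<noteq> {} \<and> card A \<le> K \<and>
     (\<forall>i\<in>{0..<n} - A. \<forall>j\<in>{0..<n} - A. \<not> E i j) \<and>
     card {v \<in> {0..<n} - A. \<exists>a\<in>A. \<not> E v a} \<le> 1 \<and>
     num_edges n E \<ge> m0
     \<longrightarrow> \<bar>graph_spectral_radius n E - sqrt (real (num_edges n E))
            - real (induced_edges A E) / real (card A)\<bar>
         \<le> c / sqrt (real (num_edges n E))"
proof (intro exI[of _ "3 * (real K)\<^sup>2"] exI[of _ "2 * K\<^sup>2 + K + 1"] allI impI, elim conjE)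
  fix n E A
  assume hyps: "simple_graph n E" "A \<subseteq> {0..<n}" "A \<noteq> {}" "card A \<le> K"
    "\<forall>i\<in>{0..<n} - A. \<forall>j\<in>{0..<n} - A. \<not> E i j"
    "card {v \<in> {0..<n} - A. \<exists>a\<in>A. \<not> E v a} \<le> 1"
    "2 * K\<^sup>2 + K + 1 \<le> num_edges n E"
  interpret graph_with_core n E A
    using hyps by unfold_locales
  have "\<And>i j. i \<in> periphery \<Longrightarrow> j \<in> periphery \<Longrightarrow> \<not> E i j" using hyps(5) by blast
  from spectral_radius_asymptotics[OF this hyps(6,4,7)]
  show "\<bar>graph_spectral_radius n E - sqrt (real (num_edges n E))
            - real (induced_edges A E) / real (card A)\<bar>
         \<le> 3 * (real K)\<^sup>2 / sqrt (real (num_edges n E))"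
    by (simp add: density_def)
qed

end
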